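(* Let $x^{(0)}=(x^{(0)}_1,\dots,x^{(0)}_n)\in\mathbb R^n$, let $h_0:=H(x^{(0)})$ and $v_i^{(0)}:=a_1x^{(0)}_1+\dots+a_ix^{(0)}_i$ ($v_0^{(0)}:=0$). Define $f(t):=\dfrac{e^{h_0t}-1}{(e^{h_0t}+1)h_0}=\dfrac1{h_0}\tanh\!\big(\tfrac{h_0t}{2}\big)$ if $h_0\neq0$, and $f(t):=t/2$ if $h_0=0$. Then the solution $x(t)$ of $\dot x_i=x_i\big(\sum_{j>i}a_jx_j-\sum_{j<i}a_jx_j\big)$ ($i=1,\dots,n$) with $x(0)=x^{(0)}$ is given, for $t$ in the interval around $0$ where the denominators do not vanish, by $$x_i(t)=x_i^{(0)}\frac{(1-f(t)h_0)(1+f(t)h_0)}{\big(1-f(t)h_0+2f(t)v^{(0)}_{i-1}\big)\big(1-f(t)h_0+2f(t)v^{(0)}_i\big)},\qquad i=1,\dots,n.$$ Equivalently, when $h_0\ne0$, $x_i(t)=\dfrac{x_i^{(0)}e^{th_0}h_0^2}{\big(h_0+(e^{th_0}-1)v^{(0)}_{i-1}\big)\big(h_0+(e^{th_0}-1)v^{(0)}_i\big)}$.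
   Context: Here $(a_1,\dots,a_n)\in\mathbb R^n\setminus\{0\}$ and $H=a_1x_1+\dots+a_nx_n$. *)

theory Defs
  imports "HOL-Analysis.Analysis"
begin

text \<open>Vectors in R^n are represented as functions nat => real, using indices 1..n.\<close>

definition Hval :: "(nat \<Rightarrow> real) \<Rightarrow> nat \<Rightarrow> (nat \<Rightarrow> real) \<Rightarrow> real" where
  "Hval a n x = (\<Sum>j=1..n. a j * x j)"

definition vpart :: "(nat \<Rightarrow> real) \<Rightarrow> (nat \<Rightarrow> real) \<Rightarrow> nat \<Rightarrow> real" where
  "vpart a x i = (\<Sum>j=1..i. a j * x j)"

definition fcoef :: "real \<Rightarrow> real \<Rightarrow> real" where
  "fcoef h t = (if h \<noteq> 0 then (exp (h * t) - 1) / ((exp (h * t) + 1) * h) else t / 2)"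

definition rhs :: "(nat \<Rightarrow> real) \<Rightarrow> nat \<Rightarrow> (nat \<Rightarrow> real) \<Rightarrow> nat \<Rightarrow> real" where
  "rhs a n x i = x i * ((\<Sum>j\<in>{i<..n}. a j * x j) - (\<Sum>j\<in>{1..<i}. a j * x j))"

definition solformula :: "(nat \<Rightarrow> real) \<Rightarrow> nat \<Rightarrow> (nat \<Rightarrow> real) \<Rightarrow> real \<Rightarrow> nat \<Rightarrow> real" where
  "solformula a n x0 t i =
     (let h0 = Hval a n x0; f = fcoef h0 t in
      x0 i * ((1 - f * h0) * (1 + f * h0)) /
        ((1 - f * h0 + 2 * f * vpart a x0 (i - 1)) * (1 - f * h0 + 2 * f * vpart a x0 i)))"

end

theory Submission
  imports Defs
begin

text \<open>Write \<open>g = f h\<^sub>0 = tanh (h\<^sub>0 t / 2)\<close>, so that \<open>f' = (1 - g\<^sup>2) / 2\<close>, and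
  \<open>D\<^sub>k = 1 - g + 2 f v\<^sub>k\<close> for the denominators. The terms \<open>a\<^sub>j x\<^sub>j(t)\<close> of the formula telescope:
  \<open>a\<^sub>1 x\<^sub>1 + \<dots> + a\<^sub>k x\<^sub>k = (1 + g) v\<^sub>k / D\<^sub>k\<close>. For \<open>k = n\<close> this says that \<open>H\<close> is conserved,
  and it turns the right-hand side of the system into
  \<open>x\<^sub>i (h\<^sub>0 - (1 + g) (v\<^sub>i\<^sub>-\<^sub>1 / D\<^sub>i\<^sub>-\<^sub>1 + v\<^sub>i / D\<^sub>i))\<close>, which is also the logarithmic derivative
  of the formula. Uniqueness is a Gronwall argument: for two solutions the energy
  \<open>\<Sum>\<^sub>j (x\<^sub>j - y\<^sub>j)\<^sup>2\<close> vanishes at \<open>0\<close> and, the vector field being locally Lipschitz, its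
  derivative is bounded by a multiple of itself on every compact segment.\<close>

lemma fcoef_mult_eq_tanh: "fcoef h t * h = tanh (h * t / 2)"
proof (cases "h = 0")
  case False
  define E where "E = exp (h * t)"
  have "E > 0" by (simp add: E_def)
  then have "E \<noteq> 0" "E + 1 \<noteq> 0" by linarith+
  have "tanh (h * t / 2) = (1 - inverse E) / (1 + inverse E)"
    by (simp add: tanh_real_altdef exp_minus E_def)
  also have "\<dots> = (E - 1) / (E + 1)"
    using \<open>E \<noteq> 0\<close> \<open>E + 1 \<noteq> 0\<close> by (simp add: divide_simps)
  also have "\<dots> = fcoef h t * h"
    using \<open>E + 1 \<noteq> 0\<close> False by (simp add: fcoef_def E_def)
  finally show ?thesis ..
qed (simp add: fcoef_def)

lemma abs_fcoef_mult_less_1: "\<bar>fcoef h t * h\<bar> < 1"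
  using tanh_real_bounds by (simp add: fcoef_mult_eq_tanh abs_less_iff)

lemma has_real_derivative_fcoef:
  "(fcoef h has_real_derivative (1 - (fcoef h t * h)\<^sup>2) / 2) (at t)"
proof (cases "h = 0")
  case True
  then show ?thesis by (auto simp: fcoef_def [abs_def] intro!: derivative_eq_intros)
next
  case False
  then have "fcoef h = (\<lambda>s. tanh (h * s / 2) / h)"
    using fcoef_mult_eq_tanh by (auto simp: fun_eq_iff field_simps)
  then show ?thesis
    using False by (auto simp: fcoef_mult_eq_tanh intro!: derivative_eq_intros)
qed

section \<open>The closed form solves the system\<close>

lemma has_real_derivative_closed_form:
  fixes F :: "real \<Rightarrow> real"
  assumes F: "(F has_real_derivative (1 - (F t * h)\<^sup>2) / 2) (at t)"
    and P: "1 - F t * h + 2 * F t * v \<noteq> 0" and Q: "1 - F t * h + 2 * F t * w \<noteq> 0"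
  shows "((\<lambda>s. c * ((1 - F s * h) * (1 + F s * h)) /
              ((1 - F s * h + 2 * F s * v) * (1 - F s * h + 2 * F s * w)))
     has_real_derivative
       c * ((1 - F t * h) * (1 + F t * h)) / ((1 - F t * h + 2 * F t * v) * (1 - F t * h + 2 * F t * w))
       * (h - (1 + F t * h) * v / (1 - F t * h + 2 * F t * v)
            - (1 + F t * h) * w / (1 - F t * h + 2 * F t * w))) (at t)"
  \<comment> \<open>With \<open>g = F h\<close>: \<open>(1 - g\<^sup>2)' = - g h (1 - g\<^sup>2)\<close> and \<open>(1 - g + 2 F v)' = (1 - g\<^sup>2) (v - h / 2)\<close>.\<close>
  by (rule derivative_eq_intros refl F)+ (use P Q in \<open>(simp_all add: divide_simps), algebra\<close>)

lemma telescoping_sum_closed_form: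
  fixes v :: "nat \<Rightarrow> real"
  assumes nonzero: "\<And>j. j \<le> k \<Longrightarrow> 1 - g + 2 * f * v j \<noteq> 0"
  shows "(\<Sum>j=1..k. (v j - v (j - 1)) * ((1 - g) * (1 + g)) /
            ((1 - g + 2 * f * v (j - 1)) * (1 - g + 2 * f * v j)))
       = (1 + g) * v k / (1 - g + 2 * f * v k) - (1 + g) * v 0 / (1 - g + 2 * f * v 0)"
proof -
  define Q where "Q j = (1 + g) * v j / (1 - g + 2 * f * v j)" for j
  have "(v j - v (j - 1)) * ((1 - g) * (1 + g)) / ((1 - g + 2 * f * v (j - 1)) * (1 - g + 2 * f * v j))
      = Q j - Q (j - 1)" if "j \<in> {1..k}" for j
  proof -
    have "1 - g + 2 * f * v (j - 1) \<noteq> 0" "1 - g + 2 * f * v j \<noteq> 0"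
      using nonzero that by auto
    then show ?thesis
      unfolding Q_def by (simp add: divide_simps) algebra
  qed
  then have "(\<Sum>j=1..k. (v j - v (j - 1)) * ((1 - g) * (1 + g)) /
               ((1 - g + 2 * f * v (j - 1)) * (1 - g + 2 * f * v j)))
      = (\<Sum>j\<in>{Suc 0..k}. Q j - Q (j - 1))"
    by (intro sum.cong) simp_all
  also have "\<dots> = Q k - Q 0"
    by (rule sum_telescope'') simp
  finally show ?thesis by (simp add: Q_def)
qed

locale closed_form_solution =
  fixes a x0 :: "nat \<Rightarrow> real" and n :: nat
begin

abbreviation h0 :: real where "h0 \<equiv> Hval a n x0"

definition denom :: "real \<Rightarrow> nat \<Rightarrow> real" where
  "denom t k = 1 - fcoef h0 t * h0 + 2 * fcoef h0 t * vpart a x0 k"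

lemma solformula_eq:
  "solformula a n x0 t i =
     x0 i * ((1 - fcoef h0 t * h0) * (1 + fcoef h0 t * h0)) / (denom t (i - 1) * denom t i)"
  by (simp add: solformula_def denom_def Let_def)

lemma solformula_at_0: "solformula a n x0 0 i = x0 i"
  by (simp add: solformula_eq denom_def fcoef_def)

lemma denom_0_nonzero: "denom t 0 \<noteq> 0"
  using abs_fcoef_mult_less_1[of h0 t] by (simp add: denom_def vpart_def)

lemma sum_solformula:
  assumes "\<And>j. j \<le> k \<Longrightarrow> denom t j \<noteq> 0"
  shows "(\<Sum>j=1..k. a j * solformula a n x0 t j) = (1 + fcoef h0 t * h0) * vpart a x0 k / denom t k"
proof -
  have "a j * solformula a n x0 t j = (vpart a x0 j - vpart a x0 (j - 1)) *
          ((1 - fcoef h0 t * h0) * (1 + fcoef h0 t * h0)) / (denom t (j - 1) * denom t j)"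
    if "j \<in> {1..k}" for j
    using that by (cases j) (simp_all add: solformula_eq vpart_def)
  then have "(\<Sum>j=1..k. a j * solformula a n x0 t j) = (\<Sum>j=1..k. (vpart a x0 j - vpart a x0 (j - 1)) *
          ((1 - fcoef h0 t * h0) * (1 + fcoef h0 t * h0)) / (denom t (j - 1) * denom t j))"
    by (rule sum.cong [OF refl])
  also have "\<dots> = (1 + fcoef h0 t * h0) * vpart a x0 k / denom t k"
    using telescoping_sum_closed_form[of k "fcoef h0 t * h0" "fcoef h0 t" "vpart a x0"] assms
    by (simp add: denom_def vpart_def)
  finally show ?thesis .
qed

lemma Hval_solformula:
  assumes "\<And>k. k \<le> n \<Longrightarrow> denom t k \<noteq> 0"
  shows "Hval a n (solformula a n x0 t) = h0"
proof -
  have "denom t n = 1 + fcoef h0 t * h0"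
    by (simp add: denom_def vpart_def Hval_def)
  moreover have "1 + fcoef h0 t * h0 \<noteq> 0"
    using abs_fcoef_mult_less_1[of h0 t] by linarith
  ultimately show ?thesis
    using sum_solformula[of n t] assms by (simp add: Hval_def vpart_def)
qed

lemma rhs_solformula:
  assumes nonzero: "\<And>k. k \<le> n \<Longrightarrow> denom t k \<noteq> 0" and i: "i \<in> {1..n}"
  shows "rhs a n (solformula a n x0 t) i = solformula a n x0 t i *
           (h0 - (1 + fcoef h0 t * h0) * vpart a x0 (i - 1) / denom t (i - 1)
               - (1 + fcoef h0 t * h0) * vpart a x0 i / denom t i)"
proof -
  let ?y = "solformula a n x0 t"
  have "Hval a n ?y = (\<Sum>j\<in>{1..i} \<union> {i<..n}. a j * ?y j)"
    unfolding Hval_def using i by (intro sum.cong) auto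
  also have "\<dots> = (\<Sum>j=1..i. a j * ?y j) + (\<Sum>j\<in>{i<..n}. a j * ?y j)"
    by (rule sum.union_disjoint) auto
  finally have "Hval a n ?y = (\<Sum>j=1..i. a j * ?y j) + (\<Sum>j\<in>{i<..n}. a j * ?y j)" .
  moreover have "(\<Sum>j=1..i. a j * ?y j) = (1 + fcoef h0 t * h0) * vpart a x0 i / denom t i"
    using nonzero i by (intro sum_solformula) auto
  ultimately have upper: "(\<Sum>j\<in>{i<..n}. a j * ?y j) = h0 - (1 + fcoef h0 t * h0) * vpart a x0 i / denom t i"
    using Hval_solformula [OF nonzero] by linarith
  have "{1..<i} = {1..i - 1}"
    using i by auto
  moreover have "(\<Sum>j=1..i - 1. a j * ?y j) = (1 + fcoef h0 t * h0) * vpart a x0 (i - 1) / denom t (i - 1)"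
    using nonzero i by (intro sum_solformula) auto
  ultimately have lower:
    "(\<Sum>j\<in>{1..<i}. a j * ?y j) = (1 + fcoef h0 t * h0) * vpart a x0 (i - 1) / denom t (i - 1)"
    by simp
  show ?thesis
    unfolding rhs_def upper lower by (simp add: algebra_simps)
qed

lemma has_real_derivative_solformula:
  assumes nonzero: "\<And>k. k \<le> n \<Longrightarrow> denom t k \<noteq> 0" and i: "i \<in> {1..n}"
  shows "((\<lambda>s. solformula a n x0 s i) has_real_derivative rhs a n (solformula a n x0 t) i) (at t)"
proof -
  have "denom t (i - 1) \<noteq> 0" "denom t i \<noteq> 0"
    using nonzero i by auto
  then have "((\<lambda>s. x0 i * ((1 - fcoef h0 s * h0) * (1 + fcoef h0 s * h0)) / (denom s (i - 1) * denom s i))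
      has_real_derivative x0 i * ((1 - fcoef h0 t * h0) * (1 + fcoef h0 t * h0)) / (denom t (i - 1) * denom t i)
        * (h0 - (1 + fcoef h0 t * h0) * vpart a x0 (i - 1) / denom t (i - 1)
             - (1 + fcoef h0 t * h0) * vpart a x0 i / denom t i)) (at t)"
    unfolding denom_def by (rule has_real_derivative_closed_form [OF has_real_derivative_fcoef])
  then show ?thesis
    by (simp only: solformula_eq rhs_solformula [OF nonzero i])
qed

lemma solformula_exp:
  assumes "h0 \<noteq> 0"
  shows "solformula a n x0 t i = x0 i * exp (t * h0) * h0\<^sup>2 /
           ((h0 + (exp (t * h0) - 1) * vpart a x0 (i - 1)) * (h0 + (exp (t * h0) - 1) * vpart a x0 i))"
proof -
  define E where "E = exp (t * h0)"
  have "E > 0" by (simp add: E_def)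
  then have "E + 1 \<noteq> 0" by linarith
  have f: "fcoef h0 t = (E - 1) / ((E + 1) * h0)"
    using assms by (simp add: fcoef_def E_def mult.commute)
  have g: "fcoef h0 t * h0 = (E - 1) / (E + 1)"
    using assms by (simp add: f)
  have num: "(1 - fcoef h0 t * h0) * (1 + fcoef h0 t * h0) = 4 * E / (E + 1)\<^sup>2"
    using \<open>E + 1 \<noteq> 0\<close> by (simp add: g divide_simps) algebra
  have den: "denom t k = 2 * (h0 + (E - 1) * vpart a x0 k) / ((E + 1) * h0)" for k
    using assms \<open>E + 1 \<noteq> 0\<close> by (simp add: denom_def g f divide_simps)
  define N where "N k = h0 + (E - 1) * vpart a x0 k" for k
  have "solformula a n x0 t i =
      x0 i * (4 * E / (E + 1)\<^sup>2) / ((2 * N (i - 1) / ((E + 1) * h0)) * (2 * N i / ((E + 1) * h0)))"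
    by (simp only: solformula_eq num den N_def)
  also have "\<dots> = x0 i * E * h0\<^sup>2 / (N (i - 1) * N i)"
    \<comment> \<open>also where a denominator vanishes: then both sides are \<open>0\<close>, as \<open>x / 0 = 0\<close>\<close>
  proof (cases "N (i - 1) * N i = 0")
    case False
    then show ?thesis
      using assms \<open>E + 1 \<noteq> 0\<close> by (simp add: divide_simps) algebra
  qed auto
  finally show ?thesis
    by (simp add: N_def E_def)
qed

end

section \<open>Uniqueness\<close>

definition growth_rate :: "(nat \<Rightarrow> real) \<Rightarrow> nat \<Rightarrow> (nat \<Rightarrow> real) \<Rightarrow> nat \<Rightarrow> real" where
  "growth_rate a n z i = (\<Sum>j\<in>{i<..n}. a j * z j) - (\<Sum>j\<in>{1..<i}. a j * z j)"

lemma rhs_eq_growth_rate: "rhs a n z i = z i * growth_rate a n z i"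
  by (simp add: rhs_def growth_rate_def)

lemma growth_rate_diff: "growth_rate a n X i - growth_rate a n Y i = growth_rate a n (\<lambda>j. X j - Y j) i"
  by (simp add: growth_rate_def sum_subtractf algebra_simps)

lemma abs_growth_rate_le:
  assumes "i \<in> {1..n}"
  shows "\<bar>growth_rate a n z i\<bar> \<le> (\<Sum>j=1..n. \<bar>a j\<bar> * \<bar>z j\<bar>)"
proof -
  have "\<bar>growth_rate a n z i\<bar> \<le> \<bar>\<Sum>j\<in>{i<..n}. a j * z j\<bar> + \<bar>\<Sum>j\<in>{1..<i}. a j * z j\<bar>"
    unfolding growth_rate_def by (rule abs_triangle_ineq4)
  also have "\<dots> \<le> (\<Sum>j\<in>{i<..n}. \<bar>a j\<bar> * \<bar>z j\<bar>) + (\<Sum>j\<in>{1..<i}. \<bar>a j\<bar> * \<bar>z j\<bar>)"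
    by (intro add_mono) (simp_all add: order_trans [OF sum_abs] abs_mult)
  also have "\<dots> = (\<Sum>j\<in>{i<..n} \<union> {1..<i}. \<bar>a j\<bar> * \<bar>z j\<bar>)"
    by (rule sum.union_disjoint [symmetric]) auto
  also have "\<dots> \<le> (\<Sum>j=1..n. \<bar>a j\<bar> * \<bar>z j\<bar>)"
    using assms by (intro sum_mono2) auto
  finally show ?thesis .
qed

lemma abs_rhs_diff_le:
  fixes X Y :: "nat \<Rightarrow> real"
  assumes X: "\<And>j. j \<in> {1..n} \<Longrightarrow> \<bar>X j\<bar> \<le> B" and Y: "\<And>j. j \<in> {1..n} \<Longrightarrow> \<bar>Y j\<bar> \<le> B"
    and i: "i \<in> {1..n}"
  shows "\<bar>rhs a n X i - rhs a n Y i\<bar>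
           \<le> (\<Sum>j=1..n. \<bar>a j\<bar>) * B * \<bar>X i - Y i\<bar> + B * (\<Sum>j=1..n. \<bar>a j\<bar> * \<bar>X j - Y j\<bar>)"
proof -
  have "\<bar>growth_rate a n X i\<bar> \<le> (\<Sum>j=1..n. \<bar>a j\<bar> * \<bar>X j\<bar>)"
    by (rule abs_growth_rate_le [OF i])
  also have "\<dots> \<le> (\<Sum>j=1..n. \<bar>a j\<bar>) * B"
    unfolding sum_distrib_right by (intro sum_mono mult_left_mono X) auto
  finally have rate_X: "\<bar>growth_rate a n X i\<bar> \<le> (\<Sum>j=1..n. \<bar>a j\<bar>) * B" .
  have "rhs a n X i - rhs a n Y i = (X i - Y i) * growth_rate a n X i + Y i * growth_rate a n (\<lambda>j. X j - Y j) i"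
    unfolding rhs_eq_growth_rate growth_rate_diff [symmetric] by (simp add: algebra_simps)
  then have "\<bar>rhs a n X i - rhs a n Y i\<bar>
      \<le> \<bar>X i - Y i\<bar> * \<bar>growth_rate a n X i\<bar> + \<bar>Y i\<bar> * \<bar>growth_rate a n (\<lambda>j. X j - Y j) i\<bar>"
    by (simp add: abs_mult order_trans [OF abs_triangle_ineq])
  also have "\<dots> \<le> \<bar>X i - Y i\<bar> * ((\<Sum>j=1..n. \<bar>a j\<bar>) * B) + B * (\<Sum>j=1..n. \<bar>a j\<bar> * \<bar>X j - Y j\<bar>)"
    using X [OF i] Y [OF i]
    by (intro add_mono mult_mono mult_left_mono rate_X abs_growth_rate_le i) auto
  finally show ?thesis
    by (simp add: algebra_simps)
qed

lemma rhs_energy_estimate: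
  fixes X Y :: "nat \<Rightarrow> real"
  assumes X: "\<And>j. j \<in> {1..n} \<Longrightarrow> \<bar>X j\<bar> \<le> B" and Y: "\<And>j. j \<in> {1..n} \<Longrightarrow> \<bar>Y j\<bar> \<le> B"
  shows "\<bar>\<Sum>i=1..n. 2 * (X i - Y i) * (rhs a n X i - rhs a n Y i)\<bar>
           \<le> 2 * (1 + real n) * (\<Sum>j=1..n. \<bar>a j\<bar>) * B * (\<Sum>i=1..n. (X i - Y i)\<^sup>2)"
proof -
  define A where "A = (\<Sum>j=1..n. \<bar>a j\<bar>)"
  define d where "d j = \<bar>X j - Y j\<bar>" for j
  define \<phi> where "\<phi> = (\<Sum>i=1..n. (d i)\<^sup>2)"
  have "B \<ge> 0" if "n \<ge> 1"
    using X [of 1] that by force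
  have d_prod: "d i * d j \<le> \<phi>" if "i \<in> {1..n}" "j \<in> {1..n}" for i j
  proof -
    have "(d i)\<^sup>2 \<le> \<phi>" "(d j)\<^sup>2 \<le> \<phi>"
      unfolding \<phi>_def using that by (auto intro: member_le_sum)
    moreover have "2 * (d i * d j) \<le> (d i)\<^sup>2 + (d j)\<^sup>2"
      using sum_squares_bound [of "d i" "d j"] by (simp add: power2_eq_square algebra_simps)
    ultimately show ?thesis
      by linarith
  qed
  have "\<bar>\<Sum>i=1..n. 2 * (X i - Y i) * (rhs a n X i - rhs a n Y i)\<bar>
      \<le> (\<Sum>i=1..n. 2 * d i * \<bar>rhs a n X i - rhs a n Y i\<bar>)"
    by (rule order_trans [OF sum_abs]) (simp only: d_def abs_mult abs_numeral order_refl)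
  also have "\<dots> \<le> (\<Sum>i=1..n. 2 * d i * (A * B * d i + B * (\<Sum>j=1..n. \<bar>a j\<bar> * d j)))"
    unfolding A_def d_def by (intro sum_mono mult_left_mono abs_rhs_diff_le X Y) auto
  also have "\<dots> = 2 * A * B * \<phi> + 2 * B * (\<Sum>i=1..n. \<Sum>j=1..n. \<bar>a j\<bar> * (d i * d j))"
    by (simp add: \<phi>_def sum.distrib sum_distrib_left power2_eq_square algebra_simps)
  also have "\<dots> \<le> 2 * A * B * \<phi> + 2 * B * (\<Sum>i=1..n. \<Sum>j=1..n. \<bar>a j\<bar> * \<phi>)"
  proof (cases "n = 0")
    case False
    have "(\<Sum>i=1..n. \<Sum>j=1..n. \<bar>a j\<bar> * (d i * d j)) \<le> (\<Sum>i=1..n. \<Sum>j=1..n. \<bar>a j\<bar> * \<phi>)"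
      by (intro sum_mono mult_left_mono d_prod) auto
    then show ?thesis
      using False \<open>n \<ge> 1 \<Longrightarrow> B \<ge> 0\<close> by (intro add_left_mono mult_left_mono) auto
  qed simp
  also have "\<dots> = 2 * (1 + real n) * A * B * \<phi>"
    by (simp add: A_def sum_distrib_left [symmetric] sum_distrib_right [symmetric] algebra_simps)
  finally show ?thesis
    by (simp add: A_def \<phi>_def d_def)
qed

lemma deriv_le_mult_imp_nonpos:
  fixes \<phi> \<phi>' :: "real \<Rightarrow> real"
  assumes "0 \<le> T" and cont: "continuous_on {0..T} \<phi>"
    and deriv: "\<And>t. 0 < t \<Longrightarrow> t < T \<Longrightarrow> (\<phi> has_real_derivative \<phi>' t) (at t)"
    and bound: "\<And>t. 0 < t \<Longrightarrow> t < T \<Longrightarrow> \<phi>' t \<le> K * \<phi> t"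
    and "\<phi> 0 = 0"
  shows "\<phi> T \<le> 0"
proof -
  define w where "w t = \<phi> t * exp (- K * t)" for t
  have "w T \<le> w 0"
  proof (rule DERIV_nonpos_imp_decreasing_open [OF \<open>0 \<le> T\<close>])
    fix t assume t: "0 < t" "t < T"
    have "(w has_real_derivative (\<phi>' t - K * \<phi> t) * exp (- K * t)) (at t)"
      unfolding w_def
      by (rule derivative_eq_intros deriv [OF t] refl)+ (simp add: algebra_simps)
    moreover have "(\<phi>' t - K * \<phi> t) * exp (- K * t) \<le> 0"
      using bound [OF t] by (simp add: mult_nonpos_nonneg)
    ultimately show "\<exists>y. (w has_real_derivative y) (at t) \<and> y \<le> 0"
      by blast
  next
    show "continuous_on {0..T} w"
      unfolding w_def by (intro continuous_intros cont)
  qed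
  then show ?thesis
    using \<open>\<phi> 0 = 0\<close> by (simp add: w_def mult_le_0_iff)
qed

lemma abs_deriv_le_mult_imp_zero:
  fixes \<phi> \<phi>' :: "real \<Rightarrow> real"
  assumes cont: "continuous_on (closed_segment 0 T) \<phi>"
    and deriv: "\<And>t. t \<in> open_segment 0 T \<Longrightarrow> (\<phi> has_real_derivative \<phi>' t) (at t)"
    and bound: "\<And>t. t \<in> open_segment 0 T \<Longrightarrow> \<bar>\<phi>' t\<bar> \<le> K * \<phi> t"
    and "\<phi> 0 = 0" and "\<phi> T \<ge> 0"
  shows "\<phi> T = 0"
proof (cases "0 \<le> T")
  case True
  have "\<phi> T \<le> 0"
    using True cont deriv bound \<open>\<phi> 0 = 0\<close>
    by (intro deriv_le_mult_imp_nonpos [of T \<phi> \<phi>' K])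
      (auto simp: closed_segment_eq_real_ivl open_segment_eq_real_ivl abs_le_iff)
  then show ?thesis
    using \<open>\<phi> T \<ge> 0\<close> by linarith
next
  case False
  define \<psi> where "\<psi> t = \<phi> (- t)" for t
  have "\<psi> (- T) \<le> 0"
  proof (rule deriv_le_mult_imp_nonpos [where \<phi> = \<psi> and T = "- T" and \<phi>' = "\<lambda>t. - \<phi>' (- t)" and K = K])
    show "continuous_on {0..- T} \<psi>"
      unfolding \<psi>_def using False
      by (intro continuous_on_compose2 [OF cont] continuous_intros)
        (auto simp: closed_segment_eq_real_ivl)
    fix t assume "0 < t" "t < - T"
    then have t: "- t \<in> open_segment 0 T"
      using False by (simp add: open_segment_eq_real_ivl)
    show "(\<psi> has_real_derivative - \<phi>' (- t)) (at t)"
      using deriv [OF t] unfolding \<psi>_def [abs_def] by (simp add: DERIV_mirror)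
    show "- \<phi>' (- t) \<le> K * \<psi> t"
      using bound [OF t] by (simp add: \<psi>_def abs_le_iff)
  qed (use False \<open>\<phi> 0 = 0\<close> in \<open>auto simp: \<psi>_def\<close>)
  then show ?thesis
    using \<open>\<phi> T \<ge> 0\<close> by (simp add: \<psi>_def)
qed

lemma compact_finite_family_bounded:
  fixes f :: "'i \<Rightarrow> 'a::topological_space \<Rightarrow> real"
  assumes "compact S" "finite J" "\<And>j. j \<in> J \<Longrightarrow> continuous_on S (f j)"
  shows "\<exists>B. \<forall>s\<in>S. \<forall>j\<in>J. \<bar>f j s\<bar> \<le> B"
proof -
  have "continuous_on S (\<lambda>s. \<Sum>j\<in>J. \<bar>f j s\<bar>)"
    using assms(3) by (intro continuous_intros) auto
  then have "bounded ((\<lambda>s. \<Sum>j\<in>J. \<bar>f j s\<bar>) ` S)"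
    using assms(1) by (intro compact_imp_bounded compact_continuous_image)
  then obtain B where B: "\<And>s. s \<in> S \<Longrightarrow> \<bar>\<Sum>j\<in>J. \<bar>f j s\<bar>\<bar> \<le> B"
    by (auto simp: bounded_real)
  have "\<bar>f j s\<bar> \<le> B" if "s \<in> S" "j \<in> J" for s j
  proof -
    have "\<bar>f j s\<bar> \<le> (\<Sum>j\<in>J. \<bar>f j s\<bar>)"
      using that assms(2) by (intro member_le_sum) auto
    then show ?thesis
      using B [OF that(1)] by linarith
  qed
  then show ?thesis
    by blast
qed

lemma has_real_derivative_at_in_open_segment:
  fixes I :: "real set"
  assumes "is_interval I" "a \<in> I" "b \<in> I"
    and deriv: "\<And>t. t \<in> I \<Longrightarrow> (f has_real_derivative f' t) (at t within I)"
    and "t \<in> open_segment a b"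
  shows "(f has_real_derivative f' t) (at t)"
proof -
  have "open (open_segment a b)"
    by (simp add: open_segment_eq_real_ivl)
  moreover have "open_segment a b \<subseteq> I"
    using assms(1-3) segment_open_subset_closed closed_segment_subset is_interval_convex by blast
  ultimately have "t \<in> interior I"
    using \<open>t \<in> open_segment a b\<close> interior_maximal by blast
  then have "at t within I = at t" and "t \<in> I"
    using at_within_interior interior_subset by blast+
  then show ?thesis
    using deriv by metis
qed

lemma has_real_derivative_sum_squared_diff:
  fixes x y :: "real \<Rightarrow> 'i \<Rightarrow> real"
  assumes "\<And>j. j \<in> J \<Longrightarrow> ((\<lambda>s. x s j) has_real_derivative x' j) (at t within S)"
    and "\<And>j. j \<in> J \<Longrightarrow> ((\<lambda>s. y s j) has_real_derivative y' j) (at t within S)"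
  shows "((\<lambda>s. \<Sum>j\<in>J. (x s j - y s j)\<^sup>2) has_real_derivative
           (\<Sum>j\<in>J. 2 * (x t j - y t j) * (x' j - y' j))) (at t within S)"
proof (rule DERIV_sum)
  fix j assume "j \<in> J"
  from DERIV_power [OF DERIV_diff [OF assms(1) assms(2)], OF this this, of 2]
  show "((\<lambda>s. (x s j - y s j)\<^sup>2) has_real_derivative 2 * (x t j - y t j) * (x' j - y' j)) (at t within S)"
    by (simp add: algebra_simps)
qed

lemma rhs_solution_unique:
  fixes x y :: "real \<Rightarrow> nat \<Rightarrow> real" and I :: "real set"
  assumes I: "is_interval I" "0 \<in> I" "T \<in> I"
    and x: "\<And>t i. t \<in> I \<Longrightarrow> i \<in> {1..n} \<Longrightarrow>
              ((\<lambda>s. x s i) has_real_derivative rhs a n (x t) i) (at t within I)"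
    and y: "\<And>t i. t \<in> I \<Longrightarrow> i \<in> {1..n} \<Longrightarrow>
              ((\<lambda>s. y s i) has_real_derivative rhs a n (y t) i) (at t within I)"
    and init: "\<And>i. i \<in> {1..n} \<Longrightarrow> x 0 i = y 0 i"
    and i: "i \<in> {1..n}"
  shows "x T i = y T i"
proof -
  define \<phi> where "\<phi> s = (\<Sum>j=1..n. (x s j - y s j)\<^sup>2)" for s
  define \<phi>' where "\<phi>' s = (\<Sum>j=1..n. 2 * (x s j - y s j) * (rhs a n (x s) j - rhs a n (y s) j))" for s
  have deriv: "(\<phi> has_real_derivative \<phi>' t) (at t within I)" if "t \<in> I" for t
    unfolding \<phi>_def [abs_def] \<phi>'_def
    by (rule has_real_derivative_sum_squared_diff) (use x y that in blast)+
  have segment: "closed_segment 0 T \<subseteq> I"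
    using I by (intro closed_segment_subset is_interval_convex)
  have deriv_at: "(\<phi> has_real_derivative \<phi>' t) (at t)" if "t \<in> open_segment 0 T" for t
    using I deriv that by (rule has_real_derivative_at_in_open_segment)
  have "continuous_on (closed_segment 0 T) (\<lambda>s. \<bar>x s j\<bar> + \<bar>y s j\<bar>)" if "j \<in> {1..n}" for j
  proof -
    have "continuous_on I (\<lambda>s. x s j)"
      using x that by (intro DERIV_continuous_on) blast
    moreover have "continuous_on I (\<lambda>s. y s j)"
      using y that by (intro DERIV_continuous_on) blast
    ultimately show ?thesis
      by (intro continuous_intros) (auto intro: continuous_on_subset [OF _ segment])
  qed
  then have "\<exists>B. \<forall>s\<in>closed_segment 0 T. \<forall>j\<in>{1..n}. \<bar>\<bar>x s j\<bar> + \<bar>y s j\<bar>\<bar> \<le> B"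
    by (rule compact_finite_family_bounded [OF compact_segment finite_atLeastAtMost])
  then obtain B where B: "\<And>s j. s \<in> closed_segment 0 T \<Longrightarrow> j \<in> {1..n} \<Longrightarrow> \<bar>\<bar>x s j\<bar> + \<bar>y s j\<bar>\<bar> \<le> B"
    by blast
  have "\<phi> T = 0"
  proof (rule abs_deriv_le_mult_imp_zero [OF _ deriv_at])
    show "continuous_on (closed_segment 0 T) \<phi>"
      using DERIV_continuous_on [OF deriv] segment by (rule continuous_on_subset)
    show "\<bar>\<phi>' t\<bar> \<le> 2 * (1 + real n) * (\<Sum>j=1..n. \<bar>a j\<bar>) * B * \<phi> t"
      if "t \<in> open_segment 0 T" for t
    proof -
      have "t \<in> closed_segment 0 T"
        using that segment_open_subset_closed by blast
      then have "\<bar>x t j\<bar> \<le> B" "\<bar>y t j\<bar> \<le> B" if "j \<in> {1..n}" for j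
        using B [of t j] that by linarith+
      then show ?thesis
        unfolding \<phi>_def \<phi>'_def by (rule rhs_energy_estimate)
    qed
    show "\<phi> 0 = 0"
      using init by (simp add: \<phi>_def)
    show "\<phi> T \<ge> 0"
      by (simp add: \<phi>_def sum_nonneg)
  qed
  then have "(x T i - y T i)\<^sup>2 = 0"
    using member_le_sum [of i "{1..n}" "\<lambda>j. (x T j - y T j)\<^sup>2"] i
    by (simp add: \<phi>_def antisym)
  then show ?thesis
    by simp
qed

theorem proposition2p6:
  fixes a x0 :: "nat \<Rightarrow> real" and n :: nat and I :: "real set"
  assumes a_nz: "\<exists>i\<in>{1..n}. a i \<noteq> 0"
    and I_int: "is_interval I" and I0: "0 \<in> I"
    and denom: "\<And>t i. t \<in> I \<Longrightarrow> i \<in> {1..n} \<Longrightarrow>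
         (let h0 = Hval a n x0; f = fcoef h0 t in
           (1 - f * h0 + 2 * f * vpart a x0 (i - 1)) * (1 - f * h0 + 2 * f * vpart a x0 i) \<noteq> 0)"
  shows
    "(\<forall>i\<in>{1..n}. solformula a n x0 0 i = x0 i)
     \<and> (\<forall>t\<in>I. \<forall>i\<in>{1..n}. ((\<lambda>s. solformula a n x0 s i) has_real_derivative
              rhs a n (solformula a n x0 t) i) (at t within I))
     \<and> (\<forall>x :: real \<Rightarrow> nat \<Rightarrow> real.
          (\<forall>i\<in>{1..n}. x 0 i = x0 i) \<and>
          (\<forall>t\<in>I. \<forall>i\<in>{1..n}. ((\<lambda>s. x s i) has_real_derivative rhs a n (x t) i) (at t within I))
          \<longrightarrow> (\<forall>t\<in>I. \<forall>i\<in>{1..n}. x t i = solformula a n x0 t i))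
     \<and> (Hval a n x0 \<noteq> 0 \<longrightarrow>
          (\<forall>t\<in>I. \<forall>i\<in>{1..n}. solformula a n x0 t i =
             (let h0 = Hval a n x0 in
               x0 i * exp (t * h0) * h0\<^sup>2 /
               ((h0 + (exp (t * h0) - 1) * vpart a x0 (i - 1)) * (h0 + (exp (t * h0) - 1) * vpart a x0 i)))))"
proof -
  interpret closed_form_solution a x0 n .
  have nonzero: "denom t k \<noteq> 0" if "t \<in> I" "k \<le> n" for t k
  proof (cases "k = 0")
    case True
    then show ?thesis by (simp add: denom_0_nonzero)
  next
    case False
    then show ?thesis
      using denom [OF that(1), of k] that(2) by (simp add: denom_def Let_def)
  qed
  have solves: "((\<lambda>s. solformula a n x0 s i) has_real_derivative rhs a n (solformula a n x0 t) i)
      (at t within I)" if "t \<in> I" "i \<in> {1..n}" for t i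
    using has_real_derivative_solformula [OF nonzero [OF that(1)] that(2)]
    by (rule has_field_derivative_at_within)
  have unique: "x t i = solformula a n x0 t i"
    if "\<forall>i\<in>{1..n}. x 0 i = x0 i"
      and "\<forall>t\<in>I. \<forall>i\<in>{1..n}. ((\<lambda>s. x s i) has_real_derivative rhs a n (x t) i) (at t within I)"
      and "t \<in> I" "i \<in> {1..n}" for x t i
    by (rule rhs_solution_unique [where a = a and n = n, OF I_int I0 \<open>t \<in> I\<close>]) (use that solves solformula_at_0 in auto)
  show ?thesis
    using solformula_at_0 solves unique solformula_exp by (auto simp: Let_def)
qed

end
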